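(* There is an absolute constant $C$ such that for every $n$, every $b\in\mathbb R$, every $w\in\mathbb R^n$ and every $\epsilon>0$, the budget-additive function $f(x)=\min(b,\sum_{i=1}^nw_ix_i)$ on $\{0,1\}^n$ satisfies $R^{lin}_{\epsilon\text{-approx}}(f)\le C\min\left(\lceil\|w\|_1^2/\epsilon\rceil,\ n\right)$.
   Context: For $S\subseteq[n]$, $\chi_S(x)=\sum_{i\in S}x_i\pmod2$. Approximate randomized $\mathbb F_2$-sketch complexity: $R^{lin}_{\epsilon\text{-approx}}(f)$ is the smallest integer $k$ such that there exist a probability distribution over $k$-tuples of subsets $\mathbf S_1,\dots,\mathbf S_k\subseteq[n]$ and $g\colon\mathbb F_2^k\to\mathbb R$ with $\mathbb E_{\mathbf S_1,\dots,\mathbf S_k}[(g(\chi_{\mathbf S_1}(x),\dots,\chi_{\mathbf S_k}(x))-f(x))^2]\le\epsilon$ for every $x\in\mathbb F_2^n$. $\|w\|_1=\sum_i|w_i|$. *)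

theory Defs
  imports "HOL-Probability.Probability"
begin

text \<open>Points of F_2^n are boolean lists of length n (True = 1); subsets S of [n] are
  subsets of {..<n}.  chi S x is the parity of the coordinates of x indexed by S.\<close>

definition chi :: "nat set \<Rightarrow> bool list \<Rightarrow> bool" where
  "chi S x = odd (card {i \<in> S. x ! i})"

definition approx_sketch :: "nat \<Rightarrow> (bool list \<Rightarrow> real) \<Rightarrow> real \<Rightarrow> nat \<Rightarrow> bool" where
  "approx_sketch n f eps k \<longleftrightarrow>
     (\<exists>(D :: nat set list pmf) (g :: bool list \<Rightarrow> real).
        (\<forall>L \<in> set_pmf D. length L = k \<and> (\<forall>S \<in> set L. S \<subseteq> {..<n})) \<and>
        (\<forall>x. length x = n \<longrightarrow>
             measure_pmf.expectation D (\<lambda>L. (g (map (\<lambda>S. chi S x) L) - f x)^2) \<le> eps))"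

definition R_lin_approx :: "nat \<Rightarrow> (bool list \<Rightarrow> real) \<Rightarrow> real \<Rightarrow> nat" where
  "R_lin_approx n f eps = (LEAST k. approx_sketch n f eps k)"

definition budget_additive :: "nat \<Rightarrow> real \<Rightarrow> (nat \<Rightarrow> real) \<Rightarrow> bool list \<Rightarrow> real" where
  "budget_additive n b w x = min b (\<Sum>i<n. w i * (if x ! i then 1 else 0))"

end

theory Submission
  imports Defs
begin

text \<open>With \<open>W = \<Sum>i. |w i|\<close>, sample an index \<open>i\<close> with probability \<open>|w i| / W\<close> and
  output \<open>W sgn(w i) x i\<close>: this is an unbiased estimator of \<open>\<Sum>i. w i x i\<close> with
  variance at most \<open>W\<^sup>2\<close>, so the mean of \<open>k = \<lceil>W\<^sup>2/eps\<rceil>\<close> independent copies has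
  mean squared error at most \<open>eps\<close>. Each copy costs two parity queries (a singleton and the
  empty set, ordered by the sign of \<open>w i\<close>), and clipping at \<open>b\<close> is 1-Lipschitz, so
  it does not increase the error. Querying all \<open>n\<close> coordinates gives the other bound.\<close>

lemma finite_set_replicate_pmf:
  "finite (set_pmf p) \<Longrightarrow> finite (set_pmf (replicate_pmf k p))"
  by (induction k) auto

lemma expectation_replicate_pmf_Suc:
  fixes F :: "'a list \<Rightarrow> real"
  assumes "finite (set_pmf p)"
  shows "measure_pmf.expectation (replicate_pmf (Suc k) p) F =
         measure_pmf.expectation p (\<lambda>a. measure_pmf.expectation (replicate_pmf k p) (\<lambda>L. F (a # L)))"
proof -
  have "replicate_pmf (Suc k) p = bind_pmf p (\<lambda>a. map_pmf (Cons a) (replicate_pmf k p))"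
    by (simp add: map_pmf_def)
  then have "measure_pmf.expectation (replicate_pmf (Suc k) p) F =
      (\<Sum>a\<in>set_pmf p. pmf p a * measure_pmf.expectation (replicate_pmf k p) (\<lambda>L. F (a # L)))"
    using assms finite_set_replicate_pmf[OF assms] by (simp add: pmf_expectation_bind[of "set_pmf p"])
  also have "\<dots> = measure_pmf.expectation p (\<lambda>a. measure_pmf.expectation (replicate_pmf k p) (\<lambda>L. F (a # L)))"
    using assms by (subst integral_measure_pmf_real[of "set_pmf p"]) (auto simp: mult.commute)
  finally show ?thesis .
qed

lemma expectation_replicate_pmf_sum_list:
  fixes h :: "'a \<Rightarrow> real"
  assumes "finite (set_pmf p)"
  shows "measure_pmf.expectation (replicate_pmf k p) (\<lambda>L. sum_list (map h L))
           = k * measure_pmf.expectation p h"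
proof (induction k)
  case (Suc k)
  have "\<And>f :: 'a list \<Rightarrow> real. integrable (measure_pmf (replicate_pmf k p)) f"
    and "\<And>f :: 'a \<Rightarrow> real. integrable (measure_pmf p) f"
    using assms finite_set_replicate_pmf[OF assms] by (auto intro: integrable_measure_pmf_finite)
  with Suc show ?case
    unfolding expectation_replicate_pmf_Suc[OF assms] by (simp add: algebra_simps)
qed simp

text \<open>The cross terms vanish because the samples are independent and centred.\<close>

lemma expectation_replicate_pmf_sum_list_square:
  fixes h :: "'a \<Rightarrow> real"
  assumes "finite (set_pmf p)" and centred: "measure_pmf.expectation p h = 0"
  shows "measure_pmf.expectation (replicate_pmf k p) (\<lambda>L. (sum_list (map h L))^2)
           = k * measure_pmf.expectation p (\<lambda>a. (h a)^2)"
proof (induction k)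
  case (Suc k)
  have "\<And>f :: 'a list \<Rightarrow> real. integrable (measure_pmf (replicate_pmf k p)) f"
    and "\<And>f :: 'a \<Rightarrow> real. integrable (measure_pmf p) f"
    using assms finite_set_replicate_pmf[OF assms(1)] by (auto intro: integrable_measure_pmf_finite)
  with Suc show ?case
    using expectation_replicate_pmf_sum_list[OF assms(1), of k h] centred
    unfolding expectation_replicate_pmf_Suc[OF assms(1)] by (simp add: power2_sum algebra_simps)
qed simp

lemma expectation_replicate_pmf_mean_error:
  fixes Y :: "'a \<Rightarrow> real"
  assumes "finite (set_pmf p)" and "k > 0"
    and mean: "measure_pmf.expectation p Y = \<mu>"
    and var: "measure_pmf.expectation p (\<lambda>a. (Y a - \<mu>)^2) \<le> v"
  shows "measure_pmf.expectation (replicate_pmf k p) (\<lambda>L. (sum_list (map Y L) / k - \<mu>)^2) \<le> v / k"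
proof -
  have "integrable (measure_pmf p) f" for f :: "_ \<Rightarrow> real"
    using assms by (auto intro: integrable_measure_pmf_finite)
  then have centred: "measure_pmf.expectation p (\<lambda>a. Y a - \<mu>) = 0"
    using mean by simp
  have "sum_list (map Y L) / k - \<mu> = sum_list (map (\<lambda>a. Y a - \<mu>) L) / k"
    if "L \<in> set_pmf (replicate_pmf k p)" for L
    using that \<open>k > 0\<close> by (simp add: set_replicate_pmf sum_list_subtractf sum_list_triv field_simps)
  then have "measure_pmf.expectation (replicate_pmf k p) (\<lambda>L. (sum_list (map Y L) / k - \<mu>)^2)
      = measure_pmf.expectation (replicate_pmf k p) (\<lambda>L. (sum_list (map (\<lambda>a. Y a - \<mu>) L))^2) / k^2"
    by (subst integral_cong_AE[OF _ _ AE_pmfI]) (auto simp: power_divide)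
  also have "\<dots> = k * measure_pmf.expectation p (\<lambda>a. (Y a - \<mu>)^2) / k^2"
    using expectation_replicate_pmf_sum_list_square[OF assms(1) centred] by simp
  also have "\<dots> \<le> v / k"
    using var \<open>k > 0\<close> by (simp add: power2_eq_square divide_right_mono)
  finally show ?thesis .
qed

definition importance_pmf :: "nat \<Rightarrow> (nat \<Rightarrow> real) \<Rightarrow> nat pmf" where
  "importance_pmf n w = pmf_of_list (map (\<lambda>i. (i, \<bar>w i\<bar> / (\<Sum>j<n. \<bar>w j\<bar>))) [0..<n])"

lemma importance_pmf_wf:
  fixes w :: "nat \<Rightarrow> real"
  assumes "(\<Sum>j<n. \<bar>w j\<bar>) > 0"
  shows "pmf_of_list_wf (map (\<lambda>i. (i, \<bar>w i\<bar> / (\<Sum>j<n. \<bar>w j\<bar>))) [0..<n])"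
proof (rule pmf_of_list_wfI)
  have "sum_list (map (\<lambda>i. \<bar>w i\<bar> / (\<Sum>j<n. \<bar>w j\<bar>)) [0..<n]) = (\<Sum>i<n. \<bar>w i\<bar>) / (\<Sum>j<n. \<bar>w j\<bar>)"
    by (simp add: sum_list_distinct_conv_sum_set atLeast0LessThan flip: sum_divide_distrib)
  then show "sum_list (map snd (map (\<lambda>i. (i, \<bar>w i\<bar> / (\<Sum>j<n. \<bar>w j\<bar>))) [0..<n])) = 1"
    using assms by (simp add: o_def)
qed (use assms in auto)

lemma set_importance_pmf:
  assumes "(\<Sum>j<n. \<bar>w j\<bar>) > 0"
  shows "set_pmf (importance_pmf n w) \<subseteq> {..<n}"
  using set_pmf_of_list[OF importance_pmf_wf[OF assms]]
  unfolding importance_pmf_def by (simp add: o_def lessThan_atLeast0)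

lemma expectation_importance_pmf:
  fixes f :: "nat \<Rightarrow> real"
  assumes "(\<Sum>j<n. \<bar>w j\<bar>) > 0"
  shows "measure_pmf.expectation (importance_pmf n w) f = (\<Sum>i<n. \<bar>w i\<bar> * f i) / (\<Sum>j<n. \<bar>w j\<bar>)"
proof -
  have "pmf (importance_pmf n w) i = \<bar>w i\<bar> / (\<Sum>j<n. \<bar>w j\<bar>)" if "i < n" for i
  proof -
    have "filter (\<lambda>j. j = i) [0..<n] = [i]"
      using that by (induction n) auto
    then show ?thesis
      unfolding importance_pmf_def pmf_pmf_of_list[OF importance_pmf_wf[OF assms]]
      by (simp add: filter_map o_def)
  qed
  then show ?thesis
    using set_importance_pmf[OF assms]
    by (subst integral_measure_pmf_real[of "{..<n}"]) (auto simp: sum_divide_distrib intro!: sum.cong)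
qed

lemma importance_estimator_moments:
  fixes n :: nat and w c :: "nat \<Rightarrow> real"
  defines "W \<equiv> \<Sum>j<n. \<bar>w j\<bar>"
  defines "Y \<equiv> \<lambda>i. W * (if 0 \<le> w i then 1 else -1) * c i"
  assumes "W > 0" and c: "\<And>i. \<bar>c i\<bar> \<le> 1"
  shows "measure_pmf.expectation (importance_pmf n w) Y = (\<Sum>i<n. w i * c i)"
    and "measure_pmf.expectation (importance_pmf n w) (\<lambda>i. (Y i - (\<Sum>i<n. w i * c i))^2) \<le> W^2"
proof -
  define \<mu> where "\<mu> = (\<Sum>i<n. w i * c i)"
  have E: "measure_pmf.expectation (importance_pmf n w) f = (\<Sum>i<n. \<bar>w i\<bar> * f i) / W" for f
    using expectation_importance_pmf \<open>W > 0\<close> unfolding W_def by blast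
  have "\<bar>w i\<bar> * Y i = W * (w i * c i)" for i
    unfolding Y_def by (simp add: abs_if)
  then have EY: "measure_pmf.expectation (importance_pmf n w) Y = \<mu>"
    using \<open>W > 0\<close> by (simp add: E \<mu>_def flip: sum_distrib_left)
  then show "measure_pmf.expectation (importance_pmf n w) Y = (\<Sum>i<n. w i * c i)"
    by (simp add: \<mu>_def)
  have "integrable (measure_pmf (importance_pmf n w)) f" for f :: "nat \<Rightarrow> real"
    using set_importance_pmf \<open>W > 0\<close> unfolding W_def
    by (blast intro: integrable_measure_pmf_finite finite_subset)
  then have "measure_pmf.expectation (importance_pmf n w) (\<lambda>i. (Y i - \<mu>)^2)
      = measure_pmf.expectation (importance_pmf n w) (\<lambda>i. (Y i)^2) - \<mu>^2"
    using EY unfolding power2_diff by (simp add: power2_eq_square[of \<mu>])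
  also have "\<dots> \<le> (\<Sum>i<n. \<bar>w i\<bar> * (Y i)^2) / W"
    by (simp add: E)
  also have "\<dots> \<le> (\<Sum>i<n. \<bar>w i\<bar> * W^2) / W"
  proof -
    have "(Y i)^2 \<le> W^2" for i
      using c[of i] \<open>W > 0\<close> unfolding Y_def
      by (simp add: power_mult_distrib abs_square_le_1)
    then show ?thesis
      using \<open>W > 0\<close> by (auto intro!: divide_right_mono sum_mono mult_left_mono)
  qed
  also have "\<dots> = W^2"
    using \<open>W > 0\<close> by (simp add: W_def power2_eq_square flip: sum_distrib_right)
  finally show "measure_pmf.expectation (importance_pmf n w) (\<lambda>i. (Y i - (\<Sum>i<n. w i * c i))^2) \<le> W^2"
    by (simp add: \<mu>_def)
qed

lemma R_lin_approx_le: "approx_sketch n f eps k \<Longrightarrow> R_lin_approx n f eps \<le> k"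
  unfolding R_lin_approx_def by (rule Least_le)

lemma chi_singleton: "chi {i} x = x ! i"
proof -
  have "{j \<in> {i}. x ! j} = (if x ! i then {i} else {})"
    by auto
  then show ?thesis
    unfolding chi_def by simp
qed

lemma chi_empty: "chi {} x = False"
  unfolding chi_def by simp

lemma approx_sketch_coordinates:
  assumes "eps \<ge> 0"
  shows "approx_sketch n f eps n"
  unfolding approx_sketch_def
proof (intro exI[of _ "return_pmf (map (\<lambda>i. {i}) [0..<n])"] exI[of _ f] conjI allI impI)
  fix x :: "bool list" assume "length x = n"
  then have "map (\<lambda>S. chi S x) (map (\<lambda>i. {i}) [0..<n]) = x"
    by (simp add: o_def chi_singleton map_nth flip: \<open>length x = n\<close>)
  then show "measure_pmf.expectation (return_pmf (map (\<lambda>i. {i}) [0..<n]))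
               (\<lambda>L. (f (map (\<lambda>S. chi S x) L) - f x)^2) \<le> eps"
    using assms by simp
qed auto

lemma approx_sketch_const:
  assumes "eps \<ge> 0"
  shows "approx_sketch n (\<lambda>_. c) eps 0"
  unfolding approx_sketch_def
  using assms by (intro exI[of _ "return_pmf []"] exI[of _ "\<lambda>_. c"]) auto

definition signed_queries :: "(nat \<Rightarrow> real) \<Rightarrow> nat list \<Rightarrow> nat set list" where
  "signed_queries w L = concat (map (\<lambda>i. if 0 \<le> w i then [{i}, {}] else [{}, {i}]) L)"

fun pair_differences :: "bool list \<Rightarrow> real" where
  "pair_differences (a # c # r) = of_bool a - of_bool c + pair_differences r"
| "pair_differences _ = 0"

lemma length_signed_queries: "length (signed_queries w L) = 2 * length L"
  unfolding signed_queries_def by (induction L) auto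

lemma set_signed_queries: "S \<in> set (signed_queries w L) \<Longrightarrow> S \<subseteq> set L"
  unfolding signed_queries_def by (induction L) (auto split: if_splits)

lemma pair_differences_signed_queries:
  "pair_differences (map (\<lambda>S. chi S x) (signed_queries w L)) =
     sum_list (map (\<lambda>i. (if 0 \<le> w i then 1 else -1) * of_bool (x ! i)) L)"
  unfolding signed_queries_def by (induction L) (auto simp: chi_singleton chi_empty)

lemma square_min_diff_le: "(min b u - min b v)^2 \<le> ((u::real) - v)^2"
  by (rule abs_le_square_iff[THEN iffD1]) (auto simp: min_def)

lemma square_error_clipped_signed_queries:
  fixes W :: real
  shows "(min b (W / k * pair_differences (map (\<lambda>S. chi S x) (signed_queries w L)))
            - budget_additive n b w x)^2
         \<le> (sum_list (map (\<lambda>i. W * (if 0 \<le> w i then 1 else -1) * of_bool (x ! i)) L) / k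
            - (\<Sum>i<n. w i * of_bool (x ! i)))^2"
proof -
  have "budget_additive n b w x = min b (\<Sum>i<n. w i * of_bool (x ! i))"
    unfolding budget_additive_def by (simp add: of_bool_def)
  moreover have "W / k * pair_differences (map (\<lambda>S. chi S x) (signed_queries w L))
      = sum_list (map (\<lambda>i. W * (if 0 \<le> w i then 1 else -1) * of_bool (x ! i)) L) / k"
    by (simp add: pair_differences_signed_queries sum_list_const_mult mult.assoc)
  ultimately show ?thesis
    by (metis square_min_diff_le)
qed

lemma approx_sketch_budget_additive_sampling:
  fixes n k :: nat and w :: "nat \<Rightarrow> real" and eps :: real
  defines "W \<equiv> \<Sum>j<n. \<bar>w j\<bar>"
  assumes "W > 0" and "k > 0" and "W^2 \<le> k * eps"
  shows "approx_sketch n (budget_additive n b w) eps (2 * k)"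
proof -
  define p where "p = importance_pmf n w"
  have p_support: "set_pmf p \<subseteq> {..<n}" "finite (set_pmf p)"
    using set_importance_pmf \<open>W > 0\<close> finite_subset unfolding p_def W_def by blast+
  define D where "D = map_pmf (signed_queries w) (replicate_pmf k p)"
  define g where "g = (\<lambda>bits. min b (W / k * pair_differences bits))"
  show ?thesis unfolding approx_sketch_def
  proof (intro exI[of _ D] exI[of _ g] conjI ballI allI impI)
    fix L assume "L \<in> set_pmf D"
    then show "length L = 2 * k" and "\<And>S. S \<in> set L \<Longrightarrow> S \<subseteq> {..<n}"
      using p_support set_signed_queries
      by (fastforce simp: D_def set_replicate_pmf length_signed_queries)+
  next
    fix x :: "bool list"
    define Y where "Y = (\<lambda>i. W * (if 0 \<le> w i then 1 else -1) * of_bool (x ! i))"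
    define \<mu> where "\<mu> = (\<Sum>i<n. w i * of_bool (x ! i))"
    have "measure_pmf.expectation D (\<lambda>L. (g (map (\<lambda>S. chi S x) L) - budget_additive n b w x)^2)
        \<le> measure_pmf.expectation (replicate_pmf k p) (\<lambda>L. (sum_list (map Y L) / k - \<mu>)^2)"
      unfolding D_def g_def Y_def \<mu>_def integral_map_pmf
      by (intro integral_mono integrable_measure_pmf_finite finite_set_replicate_pmf p_support(2)
          square_error_clipped_signed_queries)
    also have "\<dots> \<le> W^2 / k"
      using importance_estimator_moments[where n = n and w = w and c = "\<lambda>i. of_bool (x ! i)"]
        \<open>W > 0\<close> \<open>k > 0\<close>
      by (intro expectation_replicate_pmf_mean_error p_support(2))
         (simp_all add: p_def Y_def \<mu>_def W_def)
    also have "\<dots> \<le> eps"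
      using assms(3-) by (simp add: divide_le_eq mult.commute)
    finally show "measure_pmf.expectation D
        (\<lambda>L. (g (map (\<lambda>S. chi S x) L) - budget_additive n b w x)^2) \<le> eps" .
  qed
qed

lemma budget_additive_zero_weights:
  assumes "(\<Sum>j<n. \<bar>w j\<bar>) = 0"
  shows "budget_additive n b w = (\<lambda>_. min b 0)"
proof -
  have "w i = 0" if "i < n" for i
    using assms that by (simp add: sum_nonneg_eq_0_iff)
  then show ?thesis
    unfolding budget_additive_def by (simp add: fun_eq_iff)
qed

lemma R_lin_approx_budget_additive_le:
  fixes n :: nat and w :: "nat \<Rightarrow> real" and eps :: real
  defines "W \<equiv> \<Sum>j<n. \<bar>w j\<bar>"
  assumes "eps > 0"
  shows "R_lin_approx n (budget_additive n b w) eps \<le> 2 * nat \<lceil>W^2 / eps\<rceil>"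
proof (cases "W = 0")
  case True
  then have "approx_sketch n (budget_additive n b w) eps 0"
    using \<open>eps > 0\<close> by (simp add: W_def budget_additive_zero_weights approx_sketch_const)
  then show ?thesis
    by (auto dest: R_lin_approx_le)
next
  case False
  then have "W > 0"
    by (simp add: W_def order.strict_iff_order sum_nonneg)
  moreover have "W^2 \<le> real (nat \<lceil>W^2 / eps\<rceil>) * eps"
  proof -
    have "W^2 / eps \<le> real (nat \<lceil>W^2 / eps\<rceil>)"
      using \<open>eps > 0\<close> by (simp add: less_le_trans[of "-1" 0])
    then show ?thesis
      using \<open>eps > 0\<close> by (simp only: pos_divide_le_eq)
  qed
  ultimately show ?thesis
    using \<open>eps > 0\<close> unfolding W_def
    by (intro R_lin_approx_le approx_sketch_budget_additive_sampling) auto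
qed

theorem mainTheorem16:
  shows "\<exists>C::real. \<forall>(n::nat) (b::real) (w::nat \<Rightarrow> real) (eps::real). eps > 0 \<longrightarrow>
           real (R_lin_approx n (budget_additive n b w) eps)
             \<le> C * min (real_of_int \<lceil>(\<Sum>i<n. \<bar>w i\<bar>)^2 / eps\<rceil>) (real n)"
proof (intro exI[of _ 2] allI impI)
  fix n :: nat and b eps :: real and w :: "nat \<Rightarrow> real"
  assume "eps > 0"
  let ?R = "R_lin_approx n (budget_additive n b w) eps"
  let ?m = "\<lceil>(\<Sum>i<n. \<bar>w i\<bar>)^2 / eps\<rceil>"
  have "?R \<le> n"
    using \<open>eps > 0\<close> by (intro R_lin_approx_le approx_sketch_coordinates) simp
  moreover have "?R \<le> 2 * nat ?m"
    using \<open>eps > 0\<close> by (rule R_lin_approx_budget_additive_le)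
  moreover have "real (nat ?m) = real_of_int ?m"
    using \<open>eps > 0\<close> by (simp add: less_le_trans[of "-1" 0])
  ultimately show "real ?R \<le> 2 * min (real_of_int ?m) (real n)"
    by (auto simp: min_def)
qed

end
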